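(* For a topological space $X$ the following are equivalent: (1) $X$ is strongly star Menger; (2) for every nonempty $A\subseteq X$ and every sequence $(\mathcal U_n:n\in\omega)$ of families of open subsets of $X$ with $\overline A\subseteq\bigcup\mathcal U_n$ for every $n$, there is a sequence $(F_n:n\in\omega)$ of finite subsets of $X$ with $A\subseteq\bigcup_{n\in\omega}st(F_n,\mathcal U_n)$.
   Context: For a family $\mathcal U$ of subsets of $X$ and $A\subseteq X$, $st(A,\mathcal U)=\bigcup\{U\in\mathcal U: U\cap A\neq\emptyset\}$. A space $X$ is strongly star Menger if for every sequence $(\mathcal U_n:n\in\omega)$ of open covers of $X$ there are finite sets $F_n\subseteq X$ ($n\in\omega$) with $X=\bigcup_{n\in\omega}st(F_n,\mathcal U_n)$. *)

theory Defs
  imports "HOL-Analysis.Analysis"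
begin

definition st :: "'a set \<Rightarrow> 'a set set \<Rightarrow> 'a set" where
  "st A \<U> = \<Union>{U \<in> \<U>. U \<inter> A \<noteq> {}}"

definition open_cover :: "'a topology \<Rightarrow> 'a set set \<Rightarrow> bool" where
  "open_cover X \<U> \<longleftrightarrow> (\<forall>U\<in>\<U>. openin X U) \<and> topspace X \<subseteq> \<Union>\<U>"

definition strongly_star_Menger :: "'a topology \<Rightarrow> bool" where
  "strongly_star_Menger X \<longleftrightarrow>
     (\<forall>\<U> :: nat \<Rightarrow> 'a set set. (\<forall>n. open_cover X (\<U> n)) \<longrightarrow>
        (\<exists>F :: nat \<Rightarrow> 'a set. (\<forall>n. finite (F n) \<and> F n \<subseteq> topspace X) \<and>
            topspace X = (\<Union>n. st (F n) (\<U> n))))"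

end

theory Submission
  imports Defs
begin

text \<open>To pass from (1) to (2), add the open set \<open>X - cl A\<close> to every \<open>\<U>\<^sub>n\<close>: this yields
  open covers of \<open>X\<close>, and since no point of \<open>A\<close> lies in the added set, every star containing a
  point of \<open>A\<close> is already a star with respect to \<open>\<U>\<^sub>n\<close>. Conversely, (1) is (2) for \<open>A = X\<close>,
  the empty space being trivially strongly star Menger.\<close>

lemma st_empty [simp]: "st {} \<U> = {}"
  by (simp add: st_def)

lemma in_st_insertD: "x \<in> st A (insert W \<U>) \<Longrightarrow> x \<notin> W \<Longrightarrow> x \<in> st A \<U>"
  by (auto simp: st_def)

lemma open_cover_insert_complement_closure:
  assumes "\<forall>U\<in>\<U>. openin X U" and "X closure_of A \<subseteq> \<Union>\<U>"
  shows "open_cover X (insert (topspace X - X closure_of A) \<U>)"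
  using assms by (auto simp: open_cover_def)

lemma strongly_star_Menger_star_covers_subset:
  fixes \<U> :: "nat \<Rightarrow> 'a set set"
  assumes "strongly_star_Menger X"
    and "\<forall>n. \<forall>U\<in>\<U> n. openin X U" and "\<forall>n. X closure_of A \<subseteq> \<Union>(\<U> n)"
    and "A \<subseteq> topspace X"
  obtains F where "\<And>n. finite (F n) \<and> F n \<subseteq> topspace X" and "A \<subseteq> (\<Union>n. st (F n) (\<U> n))"
proof -
  define W where "W = topspace X - X closure_of A"
  have "open_cover X (insert W (\<U> n))" for n
    unfolding W_def using assms(2,3) by (simp add: open_cover_insert_complement_closure)
  then obtain F where F: "\<And>n. finite (F n) \<and> F n \<subseteq> topspace X"
    and cover: "topspace X = (\<Union>n. st (F n) (insert W (\<U> n)))"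
    using assms(1) unfolding strongly_star_Menger_def by meson
  show thesis
  proof (rule that[OF F subsetI])
    fix x
    assume "x \<in> A"
    with assms(4) cover obtain n where "x \<in> st (F n) (insert W (\<U> n))"
      by auto
    moreover have "x \<notin> W"
      unfolding W_def using \<open>x \<in> A\<close> closure_of_subset[OF assms(4)] by auto
    ultimately have "x \<in> st (F n) (\<U> n)"
      by (rule in_st_insertD)
    then show "x \<in> (\<Union>n. st (F n) (\<U> n))"
      by auto
  qed
qed

lemma st_open_cover_subset_topspace:
  assumes "open_cover X \<U>"
  shows "st A \<U> \<subseteq> topspace X"
  using assms by (auto simp: open_cover_def st_def dest: openin_subset)

lemma strongly_star_Menger_if_star_covers_topspace:
  assumes "\<And>\<U> :: nat \<Rightarrow> 'a set set. topspace X \<noteq> {} \<Longrightarrow> (\<forall>n. open_cover X (\<U> n)) \<Longrightarrow>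
      \<exists>F. (\<forall>n. finite (F n) \<and> F n \<subseteq> topspace X) \<and> topspace X \<subseteq> (\<Union>n. st (F n) (\<U> n))"
  shows "strongly_star_Menger X"
  unfolding strongly_star_Menger_def
proof (intro allI impI)
  fix \<U> :: "nat \<Rightarrow> 'a set set"
  assume covers: "\<forall>n. open_cover X (\<U> n)"
  show "\<exists>F. (\<forall>n. finite (F n) \<and> F n \<subseteq> topspace X) \<and> topspace X = (\<Union>n. st (F n) (\<U> n))"
  proof (cases "topspace X = {}")
    case True
    then show ?thesis
      by (intro exI[of _ "\<lambda>_. {}"]) simp
  next
    case False
    from assms[OF False covers] obtain F where F: "\<forall>n. finite (F n) \<and> F n \<subseteq> topspace X"
      and "topspace X \<subseteq> (\<Union>n. st (F n) (\<U> n))"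
      by auto
    moreover have "(\<Union>n. st (F n) (\<U> n)) \<subseteq> topspace X"
      using covers by (simp add: UN_least st_open_cover_subset_topspace)
    ultimately show ?thesis
      by (intro exI[of _ F]) auto
  qed
qed

theorem proposition2p1:
  fixes X :: "'a topology"
  shows "strongly_star_Menger X \<longleftrightarrow>
    (\<forall>(A :: 'a set) (\<U> :: nat \<Rightarrow> 'a set set).
        A \<noteq> {} \<and> A \<subseteq> topspace X \<and>
        (\<forall>n. (\<forall>U\<in>\<U> n. openin X U) \<and> X closure_of A \<subseteq> \<Union>(\<U> n)) \<longrightarrow>
        (\<exists>F :: nat \<Rightarrow> 'a set. (\<forall>n. finite (F n) \<and> F n \<subseteq> topspace X) \<and>
            A \<subseteq> (\<Union>n. st (F n) (\<U> n))))"
proof (intro iffI allI impI)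
  fix A :: "'a set" and \<U> :: "nat \<Rightarrow> 'a set set"
  assume ssm: "strongly_star_Menger X"
    and "A \<noteq> {} \<and> A \<subseteq> topspace X \<and> (\<forall>n. (\<forall>U\<in>\<U> n. openin X U) \<and> X closure_of A \<subseteq> \<Union>(\<U> n))"
  then have opens: "\<forall>n. \<forall>U\<in>\<U> n. openin X U" and closure: "\<forall>n. X closure_of A \<subseteq> \<Union>(\<U> n)"
    and A_subset: "A \<subseteq> topspace X"
    by auto
  obtain F where "\<And>n. finite (F n) \<and> F n \<subseteq> topspace X" "A \<subseteq> (\<Union>n. st (F n) (\<U> n))"
    using strongly_star_Menger_star_covers_subset[OF ssm opens closure A_subset] by blast
  then show "\<exists>F. (\<forall>n. finite (F n) \<and> F n \<subseteq> topspace X) \<and> A \<subseteq> (\<Union>n. st (F n) (\<U> n))"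
    by blast
next
  assume star_covers: "\<forall>A (\<U> :: nat \<Rightarrow> 'a set set). A \<noteq> {} \<and> A \<subseteq> topspace X \<and>
      (\<forall>n. (\<forall>U\<in>\<U> n. openin X U) \<and> X closure_of A \<subseteq> \<Union>(\<U> n)) \<longrightarrow>
      (\<exists>F. (\<forall>n. finite (F n) \<and> F n \<subseteq> topspace X) \<and> A \<subseteq> (\<Union>n. st (F n) (\<U> n)))"
  show "strongly_star_Menger X"
  proof (rule strongly_star_Menger_if_star_covers_topspace)
    fix \<U> :: "nat \<Rightarrow> 'a set set"
    assume "topspace X \<noteq> {}" and "\<forall>n. open_cover X (\<U> n)"
    then show "\<exists>F. (\<forall>n. finite (F n) \<and> F n \<subseteq> topspace X) \<and> topspace X \<subseteq> (\<Union>n. st (F n) (\<U> n))"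
      by (intro star_covers[rule_format]) (simp add: open_cover_def)
  qed
qed

end
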